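(* Let $\rho\in(0,1)$ and $\sigma_x<\sigma_y$. Let $r>0$ and $\theta\in[\theta_M,\frac{5\pi}{4}]$, and let $\mathbf a=(x_1,y_1)=(x_2^*+r\cos\theta,\,x_2^*+r\sin\theta)$. If $\mathbf a\neq\mathbf a^*$ and $x_1^2+y_1^2>2x_2^{*2}$, then $K(\mathbf a,\mathbf b^* )>0$.
   Context: Standing setup. Fix $\sigma_x,\sigma_y>0$ and $\rho\in(-1,1)$, and let $(\xi,\eta)$ be a bivariate normal random vector with mean $(0,0)$ and covariance matrix $\Sigma=\begin{pmatrix}\sigma_x^2&\rho\sigma_x\sigma_y\\ \rho\sigma_x\sigma_y&\sigma_y^2\end{pmatrix}$. Player I (the minimizer) chooses $\mathbf a=(x_1,y_1)\in\mathbb R^2$ and Player II (the maximizer) chooses $\mathbf b=(x_2,y_2)\in\mathbb R^2$. Let $C_1(\mathbf a,\mathbf b)=\{(x,y):(x_1-x)^2+(y_1-y)^2<(x_2-x)^2+(y_2-y)^2\}$ and $C_2(\mathbf a,\mathbf b)=\{(x,y):(x_1-x)^2+(y_1-y)^2>(x_2-x)^2+(y_2-y)^2\}$. The payoff to Player II (paid by Player I) is $K(\mathbf a,\mathbf b)=x_1+y_1$ if $\mathbf a=\mathbf b$, and $K(\mathbf a,\mathbf b)=(x_1+y_1)\,P((\xi,\eta)\in C_1(\mathbf a,\mathbf b))+(x_2+y_2)\,P((\xi,\eta)\in C_2(\mathbf a,\mathbf b))$ if $\mathbf a\neq\mathbf b$. For $\mathbf a=(x,y)$ write $-\mathbf a=(-x,-y)$.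 Let $x_2^*=\frac{\sqrt{2\pi(\sigma_x^2+2\rho\sigma_x\sigma_y+\sigma_y^2)}}{4}$, $\mathbf b^*=(x_2^*,x_2^* )$ and $\mathbf a^*=(-x_2^*,-x_2^* )$. With $c=\frac{\sigma_y^2-\sigma_x^2}{2\rho\sigma_x\sigma_y}$, $\theta_M$ denotes the unique angle in $(\pi/2,\pi)$ with $\tan\theta_M=c-\sqrt{c^2+1}$. *)

theory Defs
  imports "HOL-Analysis.Analysis"
begin

definition bvn_density :: "real \<Rightarrow> real \<Rightarrow> real \<Rightarrow> real \<times> real \<Rightarrow> real" where
  "bvn_density sx sy rho p =
     (let x = fst p; y = snd p in
      exp (- (x\<^sup>2 / sx\<^sup>2 - 2 * rho * x * y / (sx * sy) + y\<^sup>2 / sy\<^sup>2) / (2 * (1 - rho\<^sup>2)))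
      / (2 * pi * sx * sy * sqrt (1 - rho\<^sup>2)))"

definition bvn :: "real \<Rightarrow> real \<Rightarrow> real \<Rightarrow> (real \<times> real) measure" where
  "bvn sx sy rho = density lborel (\<lambda>p. ennreal (bvn_density sx sy rho p))"

definition C1 :: "real \<times> real \<Rightarrow> real \<times> real \<Rightarrow> (real \<times> real) set" where
  "C1 a b = {(x, y). (fst a - x)\<^sup>2 + (snd a - y)\<^sup>2 < (fst b - x)\<^sup>2 + (snd b - y)\<^sup>2}"

definition C2 :: "real \<times> real \<Rightarrow> real \<times> real \<Rightarrow> (real \<times> real) set" where
  "C2 a b = {(x, y). (fst a - x)\<^sup>2 + (snd a - y)\<^sup>2 > (fst b - x)\<^sup>2 + (snd b - y)\<^sup>2}"

text \<open>Payoff to Player II.\<close>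
definition K :: "real \<Rightarrow> real \<Rightarrow> real \<Rightarrow> real \<times> real \<Rightarrow> real \<times> real \<Rightarrow> real" where
  "K sx sy rho a b =
     (if a = b then fst a + snd a
      else (fst a + snd a) * measure (bvn sx sy rho) (C1 a b)
         + (fst b + snd b) * measure (bvn sx sy rho) (C2 a b))"

definition x2star :: "real \<Rightarrow> real \<Rightarrow> real \<Rightarrow> real" where
  "x2star sx sy rho = sqrt (2 * pi * (sx\<^sup>2 + 2 * rho * sx * sy + sy\<^sup>2)) / 4"

definition bstar :: "real \<Rightarrow> real \<Rightarrow> real \<Rightarrow> real \<times> real" where
  "bstar sx sy rho = (x2star sx sy rho, x2star sx sy rho)"

definition astar :: "real \<Rightarrow> real \<Rightarrow> real \<Rightarrow> real \<times> real" where
  "astar sx sy rho = (- x2star sx sy rho, - x2star sx sy rho)"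

definition cpar :: "real \<Rightarrow> real \<Rightarrow> real \<Rightarrow> real" where
  "cpar sx sy rho = (sy\<^sup>2 - sx\<^sup>2) / (2 * rho * sx * sy)"

definition thetaM :: "real \<Rightarrow> real \<Rightarrow> real \<Rightarrow> real" where
  "thetaM sx sy rho = (THE t. pi / 2 < t \<and> t < pi \<and>
      tan t = cpar sx sy rho - sqrt ((cpar sx sy rho)\<^sup>2 + 1))"

end

theory Submission
  imports Defs "HOL-Probability.Probability" "HOL-Real_Asymp.Real_Asymp"
begin

text \<open>Write a = b* + d and s = x2*. The cell C1(a, b*) is the half-plane of points p with
  d \<bullet> p > e, where e = (|a|^2 - 2 s^2) / 2, and d1 \<xi> + d2 \<eta> is centred normal with variance
  \<sigma>^2 = d' \<Sigma> d; hence K(a, b*) = 2 s - m Q(e / \<sigma>) with m = -(d1 + d2) and Q the standard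
  normal tail. For directions of d with angle in [\<theta>_M, 5\<pi>/4] one has \<sigma>^2 \<le> |d|^2 V / 2,
  V = Var(\<xi> + \<eta>), and the bound (sqrt \<pi> + sqrt 2 u) Q(u) < sqrt \<pi> / 2 for u > 0, which follows
  from Mills' ratio and a monotonicity argument, turns into m Q(e / \<sigma>) < 2 s precisely because
  s = sqrt (2 \<pi> V) / 4.\<close>

lemma normal_density_scale:
  assumes "a \<noteq> 0" "s > 0"
  shows "\<bar>a\<bar> * normal_density 0 (\<bar>a\<bar> * s) (a * x) = normal_density 0 s x"
  using assms by (simp add: normal_density_def real_sqrt_mult power_mult_distrib field_simps)

lemma nn_integral_normal_density_scale:
  fixes g :: "real \<Rightarrow> real"
  assumes a: "a \<noteq> 0" and s: "s > 0"
    and [measurable]: "g \<in> borel_measurable borel" and g_nonneg: "\<And>x. g x \<ge> 0"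
  shows "(\<integral>\<^sup>+x. ennreal (normal_density 0 s x * g (a * x)) \<partial>lborel)
       = (\<integral>\<^sup>+z. ennreal (normal_density 0 (\<bar>a\<bar> * s) z * g z) \<partial>lborel)"
proof -
  have "(\<integral>\<^sup>+z. ennreal (normal_density 0 (\<bar>a\<bar> * s) z * g z) \<partial>lborel)
      = \<bar>a\<bar> * (\<integral>\<^sup>+x. ennreal (normal_density 0 (\<bar>a\<bar> * s) (0 + a * x) * g (0 + a * x)) \<partial>lborel)"
    by (rule nn_integral_real_affine) (use a in auto)
  also have "\<dots> = (\<integral>\<^sup>+x. ennreal \<bar>a\<bar> * ennreal (normal_density 0 (\<bar>a\<bar> * s) (a * x) * g (a * x)) \<partial>lborel)"
    by (subst nn_integral_cmult) auto
  also have "\<dots> = (\<integral>\<^sup>+x. ennreal (normal_density 0 s x * g (a * x)) \<partial>lborel)"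
    using g_nonneg normal_density_scale[OF a s]
    by (intro nn_integral_cong) (auto simp: mult.assoc[symmetric] simp flip: ennreal_mult)
  finally show ?thesis ..
qed

lemma nn_integral_lborel_translate:
  fixes f :: "real \<Rightarrow> real"
  assumes [measurable]: "f \<in> borel_measurable borel"
  shows "(\<integral>\<^sup>+z. ennreal (f z) \<partial>lborel) = (\<integral>\<^sup>+t. ennreal (f (y + t)) \<partial>lborel)"
  using nn_integral_real_affine[of "\<lambda>z. ennreal (f z)" 1 y] by simp

lemma nn_integral_normal_density:
  "s > 0 \<Longrightarrow> (\<integral>\<^sup>+x. ennreal (normal_density 0 s x) \<partial>lborel) = 1"
  by (subst nn_integral_eq_integral) auto

lemma nn_integral_normal_linear_combination_nonzero:
  fixes g :: "real \<Rightarrow> real"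
  assumes s: "s > 0" and t: "t > 0" and a: "a \<noteq> 0" and b: "b \<noteq> 0"
    and g[measurable]: "g \<in> borel_measurable borel" and g_nonneg: "\<And>z. g z \<ge> 0"
  shows "(\<integral>\<^sup>+x. \<integral>\<^sup>+w. ennreal (normal_density 0 s x * normal_density 0 t w * g (a * x + b * w)) \<partial>lborel \<partial>lborel)
       = (\<integral>\<^sup>+z. ennreal (normal_density 0 (sqrt (a\<^sup>2 * s\<^sup>2 + b\<^sup>2 * t\<^sup>2)) z * g z) \<partial>lborel)"
proof -
  define s1 where "s1 = \<bar>a\<bar> * s"
  define t1 where "t1 = \<bar>b\<bar> * t"
  have s1: "s1 > 0" and t1: "t1 > 0" using s t a b by (auto simp: s1_def t1_def)
  have "sqrt (a\<^sup>2 * s\<^sup>2 + b\<^sup>2 * t\<^sup>2) = sqrt (s1\<^sup>2 + t1\<^sup>2)"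
    by (simp add: s1_def t1_def power_mult_distrib)
  then have "(\<integral>\<^sup>+z. ennreal (normal_density 0 (sqrt (a\<^sup>2 * s\<^sup>2 + b\<^sup>2 * t\<^sup>2)) z * g z) \<partial>lborel)
      = (\<integral>\<^sup>+z. ennreal (normal_density 0 (sqrt (s1\<^sup>2 + t1\<^sup>2)) z) * ennreal (g z) \<partial>lborel)"
    using g_nonneg by (simp add: ennreal_mult)
  also have "\<dots> = (\<integral>\<^sup>+z. (\<integral>\<^sup>+y. ennreal (normal_density 0 s1 (z - y) * normal_density 0 t1 y) \<partial>lborel) * ennreal (g z) \<partial>lborel)"
    using fun_cong[OF conv_normal_density_zero_mean[OF s1 t1]] by simp
  also have "\<dots> = (\<integral>\<^sup>+z. \<integral>\<^sup>+y. ennreal (normal_density 0 s1 (z - y) * normal_density 0 t1 y * g z) \<partial>lborel \<partial>lborel)"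
    using g_nonneg by (subst nn_integral_multc[symmetric]) (auto simp: ennreal_mult)
  also have "\<dots> = (\<integral>\<^sup>+y. \<integral>\<^sup>+z. ennreal (normal_density 0 s1 (z - y) * normal_density 0 t1 y * g z) \<partial>lborel \<partial>lborel)"
    by (rule lborel_pair.Fubini') measurable
  also have "\<dots> = (\<integral>\<^sup>+y. \<integral>\<^sup>+u. ennreal (normal_density 0 s1 u * (normal_density 0 t1 y * g (y + u))) \<partial>lborel \<partial>lborel)"
    apply (rule nn_integral_cong)
    subgoal for y by (subst nn_integral_lborel_translate[where y = y]) (measurable, simp add: ac_simps)
    done
  also have "\<dots> = (\<integral>\<^sup>+y. \<integral>\<^sup>+x. ennreal (normal_density 0 s x * (normal_density 0 t1 y * g (y + a * x))) \<partial>lborel \<partial>lborel)"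
    apply (rule nn_integral_cong)
    subgoal for y
      by (subst nn_integral_normal_density_scale[OF a s, where g = "\<lambda>u. normal_density 0 t1 y * g (y + u)",
            folded s1_def, symmetric]) (use g_nonneg in simp_all)
    done
  also have "\<dots> = (\<integral>\<^sup>+x. \<integral>\<^sup>+y. ennreal (normal_density 0 s x * (normal_density 0 t1 y * g (y + a * x))) \<partial>lborel \<partial>lborel)"
    by (rule lborel_pair.Fubini') measurable
  also have "\<dots> = (\<integral>\<^sup>+x. \<integral>\<^sup>+y. ennreal (normal_density 0 t1 y * (normal_density 0 s x * g (y + a * x))) \<partial>lborel \<partial>lborel)"
    by (simp add: ac_simps)
  also have "\<dots> = (\<integral>\<^sup>+x. \<integral>\<^sup>+w. ennreal (normal_density 0 t w * (normal_density 0 s x * g (b * w + a * x))) \<partial>lborel \<partial>lborel)"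
    apply (rule nn_integral_cong)
    subgoal for x
      by (subst nn_integral_normal_density_scale[OF b t, where g = "\<lambda>u. normal_density 0 s x * g (u + a * x)",
            folded t1_def, symmetric]) (use g_nonneg in simp_all)
    done
  finally show ?thesis by (simp add: ac_simps)
qed

lemma nn_integral_normal_linear_combination:
  fixes g :: "real \<Rightarrow> real"
  assumes s: "s > 0" and t: "t > 0" and ab: "a \<noteq> 0 \<or> b \<noteq> 0"
    and g[measurable]: "g \<in> borel_measurable borel" and g_nonneg: "\<And>z. g z \<ge> 0"
  shows "(\<integral>\<^sup>+x. \<integral>\<^sup>+w. ennreal (normal_density 0 s x * normal_density 0 t w * g (a * x + b * w)) \<partial>lborel \<partial>lborel)
       = (\<integral>\<^sup>+z. ennreal (normal_density 0 (sqrt (a\<^sup>2 * s\<^sup>2 + b\<^sup>2 * t\<^sup>2)) z * g z) \<partial>lborel)"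
proof -
  consider "a \<noteq> 0" "b \<noteq> 0" | "b = 0" "a \<noteq> 0" | "a = 0" "b \<noteq> 0"
    using ab by blast
  then show ?thesis
  proof cases
    case 1
    then show ?thesis by (rule nn_integral_normal_linear_combination_nonzero[OF s t _ _ g g_nonneg])
  next
    case 2
    have "(\<integral>\<^sup>+x. \<integral>\<^sup>+w. ennreal (normal_density 0 s x * normal_density 0 t w * g (a * x + b * w)) \<partial>lborel \<partial>lborel)
        = (\<integral>\<^sup>+x. ennreal (normal_density 0 s x * g (a * x)) * (\<integral>\<^sup>+w. ennreal (normal_density 0 t w) \<partial>lborel) \<partial>lborel)"
      using g_nonneg
      by (intro nn_integral_cong, subst nn_integral_cmult[symmetric])
        (auto simp: 2 ennreal_mult[symmetric] ac_simps intro!: nn_integral_cong)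
    also have "\<dots> = (\<integral>\<^sup>+z. ennreal (normal_density 0 (\<bar>a\<bar> * s) z * g z) \<partial>lborel)"
      using nn_integral_normal_density[OF t] nn_integral_normal_density_scale[OF \<open>a \<noteq> 0\<close> s g g_nonneg]
      by simp
    also have "\<bar>a\<bar> * s = sqrt (a\<^sup>2 * s\<^sup>2 + b\<^sup>2 * t\<^sup>2)"
      using s by (simp add: 2 real_sqrt_mult)
    finally show ?thesis .
  next
    case 3
    have "(\<integral>\<^sup>+x. \<integral>\<^sup>+w. ennreal (normal_density 0 s x * normal_density 0 t w * g (a * x + b * w)) \<partial>lborel \<partial>lborel)
        = (\<integral>\<^sup>+x. ennreal (normal_density 0 s x) * (\<integral>\<^sup>+w. ennreal (normal_density 0 t w * g (b * w)) \<partial>lborel) \<partial>lborel)"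
      using g_nonneg
      by (intro nn_integral_cong, subst nn_integral_cmult[symmetric])
        (auto simp: 3 ennreal_mult[symmetric] ac_simps intro!: nn_integral_cong)
    also have "\<dots> = (\<integral>\<^sup>+z. ennreal (normal_density 0 (\<bar>b\<bar> * t) z * g z) \<partial>lborel)"
      using nn_integral_normal_density[OF s] nn_integral_normal_density_scale[OF \<open>b \<noteq> 0\<close> t g g_nonneg]
      by (simp add: nn_integral_multc)
    also have "\<bar>b\<bar> * t = sqrt (a\<^sup>2 * s\<^sup>2 + b\<^sup>2 * t\<^sup>2)"
      using t by (simp add: 3 real_sqrt_mult)
    finally show ?thesis .
  qed
qed

definition bvn_lin_variance :: "real \<Rightarrow> real \<Rightarrow> real \<Rightarrow> real \<Rightarrow> real \<Rightarrow> real" where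
  "bvn_lin_variance sx sy rho d1 d2 = d1\<^sup>2 * sx\<^sup>2 + 2 * rho * d1 * d2 * sx * sy + d2\<^sup>2 * sy\<^sup>2"

lemma bvn_lin_variance_pos:
  assumes sx: "sx > 0" and sy: "sy > 0" and rho: "\<bar>rho\<bar> < 1" and d: "d1 \<noteq> 0 \<or> d2 \<noteq> 0"
  shows "bvn_lin_variance sx sy rho d1 d2 > 0"
proof -
  have rho2: "1 - rho\<^sup>2 > 0" using rho by (simp add: abs_square_less_1)
  have eq: "bvn_lin_variance sx sy rho d1 d2 = (d1 * sx + rho * d2 * sy)\<^sup>2 + (1 - rho\<^sup>2) * (d2 * sy)\<^sup>2"
    unfolding bvn_lin_variance_def by (simp add: algebra_simps power2_eq_square)
  show ?thesis
  proof (cases "d2 = 0")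
    case True
    then show ?thesis using d sx by (simp add: bvn_lin_variance_def)
  next
    case False
    then have "(1 - rho\<^sup>2) * (d2 * sy)\<^sup>2 > 0" using rho2 sy by simp
    then show ?thesis unfolding eq by (simp add: add_nonneg_pos)
  qed
qed

lemma bvn_lin_variance_scale:
  "bvn_lin_variance sx sy rho (k * d1) (k * d2) = k\<^sup>2 * bvn_lin_variance sx sy rho d1 d2"
  unfolding bvn_lin_variance_def by (simp add: power2_eq_square algebra_simps)

lemma bvn_density_factor:
  assumes sx: "sx > 0" and sy: "sy > 0" and rho: "\<bar>rho\<bar> < 1"
  shows "bvn_density sx sy rho (x, y)
       = normal_density 0 sx x * normal_density 0 (sy * sqrt (1 - rho\<^sup>2)) (y - rho * sy / sx * x)"
proof -
  have rho2: "1 - rho\<^sup>2 > 0" using rho by (simp add: abs_square_less_1)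
  have var: "(sy * sqrt (1 - rho\<^sup>2))\<^sup>2 = sy\<^sup>2 * (1 - rho\<^sup>2)"
    using rho2 by (simp add: power_mult_distrib)
  have const: "sqrt (2 * pi * sx\<^sup>2) * sqrt (2 * pi * (sy\<^sup>2 * (1 - rho\<^sup>2))) = 2 * pi * sx * sy * sqrt (1 - rho\<^sup>2)"
  proof -
    have "sqrt (2 * pi * sx\<^sup>2) = sqrt (2 * pi) * sx" using sx by (simp add: real_sqrt_mult)
    moreover have "sqrt (2 * pi * (sy\<^sup>2 * (1 - rho\<^sup>2))) = sqrt (2 * pi) * sy * sqrt (1 - rho\<^sup>2)"
      using sy by (simp add: real_sqrt_mult)
    ultimately show ?thesis by simp
  qed
  have "(y - rho * sy / sx * x)\<^sup>2 = (sx * y - rho * sy * x)\<^sup>2 / sx\<^sup>2"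
    using sx by (simp add: power_divide[symmetric] diff_divide_distrib)
  then have expo: "- (x\<^sup>2 / sx\<^sup>2 - 2 * rho * x * y / (sx * sy) + y\<^sup>2 / sy\<^sup>2) / (2 * (1 - rho\<^sup>2))
     = - (x - 0)\<^sup>2 / (2 * sx\<^sup>2) + - (y - rho * sy / sx * x - 0)\<^sup>2 / (2 * (sy\<^sup>2 * (1 - rho\<^sup>2)))"
    using sx sy rho2 by (simp add: divide_simps) (simp add: power2_eq_square algebra_simps)
  show ?thesis
    unfolding bvn_density_def normal_density_def Let_def fst_conv snd_conv var expo exp_add
    using const by simp
qed

lemma emeasure_bvn_halfplane:
  assumes sx: "sx > 0" and sy: "sy > 0" and rho: "\<bar>rho\<bar> < 1" and d: "d1 \<noteq> 0 \<or> d2 \<noteq> 0"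
  shows "emeasure (bvn sx sy rho) {p. e < d1 * fst p + d2 * snd p}
     = (\<integral>\<^sup>+z. ennreal (normal_density 0 (sqrt (bvn_lin_variance sx sy rho d1 d2)) z * indicator {e<..} z) \<partial>lborel)"
proof -
  let ?I = "indicator {e<..} :: real \<Rightarrow> real"
  define t where "t = sy * sqrt (1 - rho\<^sup>2)"
  define k where "k = rho * sy / sx"
  have rho2: "1 - rho\<^sup>2 > 0" using rho by (simp add: abs_square_less_1)
  have t: "t > 0" using sy rho2 by (simp add: t_def)
  have [measurable]: "bvn_density sx sy rho \<in> borel_measurable borel"
    unfolding bvn_density_def Let_def
    by (intro borel_measurable_continuous_onI continuous_intros) (use sx sy rho2 in auto)
  have [measurable]: "(\<lambda>p. d1 * fst p + d2 * snd p :: real) \<in> borel_measurable borel"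
    by (intro borel_measurable_continuous_onI continuous_intros)
  have "emeasure (bvn sx sy rho) {p. e < d1 * fst p + d2 * snd p}
      = (\<integral>\<^sup>+p. ennreal (bvn_density sx sy rho p) * indicator {p. e < d1 * fst p + d2 * snd p} p \<partial>lborel)"
    unfolding bvn_def by (rule emeasure_density) measurable
  also have "\<dots> = (\<integral>\<^sup>+p. ennreal (bvn_density sx sy rho p * ?I (d1 * fst p + d2 * snd p)) \<partial>(lborel \<Otimes>\<^sub>M lborel))"
    by (subst lborel_prod) (auto intro!: nn_integral_cong simp: ennreal_mult indicator_def)
  also have "\<dots> = (\<integral>\<^sup>+x. \<integral>\<^sup>+y. ennreal (bvn_density sx sy rho (x, y) * ?I (d1 * x + d2 * y)) \<partial>lborel \<partial>lborel)"
    by (subst lborel.nn_integral_fst[symmetric]) (simp_all add: lborel_prod)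
  also have "\<dots> = (\<integral>\<^sup>+x. \<integral>\<^sup>+y. ennreal (normal_density 0 t (y - k * x) * (normal_density 0 sx x * ?I (d1 * x + d2 * y))) \<partial>lborel \<partial>lborel)"
    by (simp add: bvn_density_factor[OF sx sy rho] t_def k_def ac_simps)
  also have "\<dots> = (\<integral>\<^sup>+x. \<integral>\<^sup>+w. ennreal (normal_density 0 t w * (normal_density 0 sx x * ?I (d1 * x + d2 * (k * x + w)))) \<partial>lborel \<partial>lborel)"
    apply (rule nn_integral_cong)
    subgoal for x by (subst nn_integral_lborel_translate[where y = "k * x"]) (simp_all add: algebra_simps)
    done
  also have "\<dots> = (\<integral>\<^sup>+x. \<integral>\<^sup>+w. ennreal (normal_density 0 sx x * normal_density 0 t w * ?I ((d1 + d2 * k) * x + d2 * w)) \<partial>lborel \<partial>lborel)"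
    by (simp add: algebra_simps)
  also have "\<dots> = (\<integral>\<^sup>+z. ennreal (normal_density 0 (sqrt ((d1 + d2 * k)\<^sup>2 * sx\<^sup>2 + d2\<^sup>2 * t\<^sup>2)) z * ?I z) \<partial>lborel)"
    by (rule nn_integral_normal_linear_combination[OF sx t]) (use d in auto)
  also have "(d1 + d2 * k)\<^sup>2 * sx\<^sup>2 + d2\<^sup>2 * t\<^sup>2 = bvn_lin_variance sx sy rho d1 d2"
    using sx rho2 unfolding t_def k_def bvn_lin_variance_def
    by (simp add: power_mult_distrib power2_eq_square field_simps)
  finally show ?thesis .
qed

lemma continuous_on_std_normal_density: "continuous_on S std_normal_density"
  unfolding normal_density_def by (auto intro!: continuous_intros)

lemma std_normal_density_has_real_derivative:
  "(std_normal_density has_real_derivative - t * std_normal_density t) (at t)"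
  unfolding normal_density_def
  by (auto intro!: derivative_eq_intros simp: field_simps power2_eq_square)

definition normal_tail :: "real \<Rightarrow> real" where
  "normal_tail u = measure (density lborel std_normal_density) {u<..}"

lemma ennreal_normal_tail:
  "ennreal (normal_tail u) = (\<integral>\<^sup>+z. ennreal (std_normal_density z * indicator {u<..} z) \<partial>lborel)"
proof -
  interpret prob_space "density lborel std_normal_density"
    by (rule prob_space_normal_density) simp
  have "ennreal (normal_tail u) = emeasure (density lborel std_normal_density) {u<..}"
    unfolding normal_tail_def by (simp add: emeasure_eq_measure)
  also have "\<dots> = (\<integral>\<^sup>+z. ennreal (std_normal_density z) * indicator {u<..} z \<partial>lborel)"
    by (rule emeasure_density) auto
  finally show ?thesis by (simp add: indicator_mult_ennreal mult.commute)
qed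

lemma normal_tail_nonneg: "normal_tail u \<ge> 0"
  by (simp add: normal_tail_def)

lemma normal_tail_add_uminus: "normal_tail u + normal_tail (- u) = 1"
proof -
  have "(\<integral>\<^sup>+x. ennreal (std_normal_density x * indicator {-u<..} (-1 * x)) \<partial>lborel)
      = (\<integral>\<^sup>+z. ennreal (normal_density 0 (\<bar>-1\<bar> * 1) z * indicator {-u<..} z) \<partial>lborel)"
    by (rule nn_integral_normal_density_scale) auto
  then have left: "ennreal (normal_tail (- u)) = (\<integral>\<^sup>+z. ennreal (std_normal_density z * indicator {..<u} z) \<partial>lborel)"
    unfolding ennreal_normal_tail by (simp add: indicator_def)
  have "ennreal (normal_tail u) + ennreal (normal_tail (- u))
      = (\<integral>\<^sup>+z. ennreal (std_normal_density z * indicator {u<..} z)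
              + ennreal (std_normal_density z * indicator {..<u} z) \<partial>lborel)"
    unfolding left unfolding ennreal_normal_tail by (rule nn_integral_add[symmetric]) auto
  also have "\<dots> = (\<integral>\<^sup>+z. ennreal (std_normal_density z) \<partial>lborel)"
    by (rule nn_integral_cong_AE, rule AE_mp[OF AE_lborel_singleton[of u] AE_I2])
      (auto simp: indicator_def)
  also have "\<dots> = 1"
    by (rule nn_integral_normal_density) simp
  finally show ?thesis
    using normal_tail_nonneg by (simp flip: ennreal_plus)
qed

lemma normal_tail_0: "normal_tail 0 = 1 / 2"
  using normal_tail_add_uminus[of 0] by simp

lemma normal_tail_eq_integral:
  assumes u: "u \<ge> 0"
  shows "normal_tail u = 1 / 2 - integral {0..u} std_normal_density"
proof -
  have int: "(std_normal_density has_integral integral {0..u} std_normal_density) {0..u}"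
    by (intro integrable_integral integrable_continuous_real continuous_on_std_normal_density)
  have "ennreal (normal_tail 0)
      = (\<integral>\<^sup>+z. ennreal (std_normal_density z) * indicator {0..u} z
              + ennreal (std_normal_density z * indicator {u<..} z) \<partial>lborel)"
    unfolding ennreal_normal_tail
    by (rule nn_integral_cong_AE, rule AE_mp[OF AE_lborel_singleton[of 0] AE_I2])
      (use u in \<open>auto simp: indicator_def\<close>)
  also have "\<dots> = (\<integral>\<^sup>+z. ennreal (std_normal_density z) * indicator {0..u} z \<partial>lborel) + ennreal (normal_tail u)"
    unfolding ennreal_normal_tail by (rule nn_integral_add) auto
  also have "(\<integral>\<^sup>+z. ennreal (std_normal_density z) * indicator {0..u} z \<partial>lborel)
           = ennreal (integral {0..u} std_normal_density)"
    by (rule nn_integral_has_integral_lebesgue'[OF _ int]) simp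
  finally have "normal_tail 0 = integral {0..u} std_normal_density + normal_tail u"
    using has_integral_nonneg[OF int] normal_tail_nonneg by (simp flip: ennreal_plus)
  then show ?thesis
    using normal_tail_0 by simp
qed

lemma measure_bvn_halfplane:
  assumes sx: "sx > 0" and sy: "sy > 0" and rho: "\<bar>rho\<bar> < 1" and d: "d1 \<noteq> 0 \<or> d2 \<noteq> 0"
  shows "measure (bvn sx sy rho) {p. e < d1 * fst p + d2 * snd p}
       = normal_tail (e / sqrt (bvn_lin_variance sx sy rho d1 d2))"
proof -
  define S where "S = sqrt (bvn_lin_variance sx sy rho d1 d2)"
  have S: "S > 0"
    using bvn_lin_variance_pos[OF assms] by (simp add: S_def)
  have "emeasure (bvn sx sy rho) {p. e < d1 * fst p + d2 * snd p}
      = (\<integral>\<^sup>+z. ennreal (normal_density 0 S z * indicator {e<..} z) \<partial>lborel)"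
    unfolding S_def by (rule emeasure_bvn_halfplane[OF assms])
  also have "\<dots> = (\<integral>\<^sup>+x. ennreal (std_normal_density x * indicator {e<..} (S * x)) \<partial>lborel)"
    using nn_integral_normal_density_scale[of S 1 "indicator {e<..}"] S by simp
  also have "\<dots> = ennreal (normal_tail (e / S))"
    unfolding ennreal_normal_tail using S
    by (intro nn_integral_cong) (auto simp: indicator_def field_simps)
  finally show ?thesis
    unfolding measure_def S_def using normal_tail_nonneg by simp
qed

lemma K_eq_normal_tail:
  assumes sx: "sx > 0" and sy: "sy > 0" and rho: "\<bar>rho\<bar> < 1" and ne: "(x1, y1) \<noteq> (x2, y2)"
  shows "K sx sy rho (x1, y1) (x2, y2) = x2 + y2 + (x1 + y1 - x2 - y2)
           * normal_tail ((x1\<^sup>2 + y1\<^sup>2 - x2\<^sup>2 - y2\<^sup>2) / (2 * sqrt (bvn_lin_variance sx sy rho (x1 - x2) (y1 - y2))))"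
proof -
  define e where "e = (x1\<^sup>2 + y1\<^sup>2 - x2\<^sup>2 - y2\<^sup>2) / 2"
  define q where "q = bvn_lin_variance sx sy rho (x1 - x2) (y1 - y2)"
  have d: "x1 - x2 \<noteq> 0 \<or> y1 - y2 \<noteq> 0" using ne by auto
  have "C1 (x1, y1) (x2, y2) = {p. e < (x1 - x2) * fst p + (y1 - y2) * snd p}"
    unfolding C1_def e_def by (auto simp: power2_eq_square field_simps)
  then have P1: "measure (bvn sx sy rho) (C1 (x1, y1) (x2, y2)) = normal_tail (e / sqrt q)"
    unfolding q_def by (simp add: measure_bvn_halfplane[OF sx sy rho d])
  have "C2 (x1, y1) (x2, y2) = {p. - e < (x2 - x1) * fst p + (y2 - y1) * snd p}"
    unfolding C2_def e_def by (auto simp: power2_eq_square field_simps)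
  moreover have "bvn_lin_variance sx sy rho (x2 - x1) (y2 - y1) = q"
    using bvn_lin_variance_scale[of sx sy rho "-1" "x1 - x2" "y1 - y2"] by (simp add: q_def)
  moreover have "x2 - x1 \<noteq> 0 \<or> y2 - y1 \<noteq> 0"
    using d by auto
  ultimately have "measure (bvn sx sy rho) (C2 (x1, y1) (x2, y2)) = normal_tail (- (e / sqrt q))"
    using measure_bvn_halfplane[OF sx sy rho, of "x2 - x1" "y2 - y1" "- e"] by simp
  also have "\<dots> = 1 - normal_tail (e / sqrt q)"
    using normal_tail_add_uminus[of "e / sqrt q"] by simp
  finally have P2: "measure (bvn sx sy rho) (C2 (x1, y1) (x2, y2)) = 1 - normal_tail (e / sqrt q)" .
  show ?thesis
    using ne unfolding K_def P1 P2 by (simp add: e_def q_def algebra_simps)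
qed

lemma normal_tail_mills:
  assumes u: "u > 0"
  shows "u * normal_tail u \<le> std_normal_density u"
proof -
  have der: "((\<lambda>z. - std_normal_density z) has_real_derivative z * std_normal_density z) (at z)" for z
    unfolding normal_density_def
    by (auto intro!: derivative_eq_intros simp: field_simps power2_eq_square)
  have lim: "((\<lambda>z. - std_normal_density z) \<longlongrightarrow> 0) at_top"
    unfolding normal_density_def by real_asymp
  have "ennreal u * ennreal (normal_tail u)
      \<le> (\<integral>\<^sup>+z. ennreal (z * std_normal_density z) * indicator {u..} z \<partial>lborel)"
    unfolding ennreal_normal_tail
    using u by (subst nn_integral_cmult[symmetric], simp)
      (intro nn_integral_mono, auto simp: indicator_def ennreal_mult[symmetric] intro!: ennreal_leI mult_right_mono)
  also have "\<dots> = ennreal (0 - (- std_normal_density u))"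
    by (rule nn_integral_FTC_atLeast[OF _ der _ lim]) (use u in auto)
  finally show ?thesis
    using u normal_tail_nonneg by (simp add: ennreal_mult[symmetric])
qed

lemma normal_tail_has_real_derivative:
  assumes t: "t > 0"
  shows "(normal_tail has_real_derivative - std_normal_density t) (at t)"
proof -
  have "((\<lambda>x. integral {0..x} std_normal_density) has_real_derivative std_normal_density t) (at t within {0..t + 1})"
    by (rule integral_has_real_derivative[OF continuous_on_std_normal_density]) (use t in auto)
  then have "((\<lambda>x. integral {0..x} std_normal_density) has_real_derivative std_normal_density t) (at t)"
    using t by (simp add: at_within_Icc_at)
  then have "((\<lambda>x. 1 / 2 - integral {0..x} std_normal_density) has_real_derivative - std_normal_density t) (at t)"
    by (auto intro!: derivative_eq_intros)
  then show ?thesis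
    by (rule has_field_derivative_transform_within_open[of _ _ _ "{0<..}"])
      (use t normal_tail_eq_integral in auto)
qed

lemma continuous_on_normal_tail: "continuous_on {0..u} normal_tail"
proof -
  have "continuous_on {0..u} (\<lambda>x. 1 / 2 - integral {0..x} std_normal_density)"
    by (intro continuous_intros indefinite_integral_continuous_1 integrable_continuous_real
        continuous_on_std_normal_density)
  then show ?thesis
    by (rule continuous_on_cong[THEN iffD1, rotated 2]) (auto simp: normal_tail_eq_integral)
qed

lemma sqrt_half_pi_std_normal_density_0: "sqrt (pi / 2) * std_normal_density 0 = 1 / 2"
proof -
  have "sqrt (pi / 2) * std_normal_density 0 = sqrt (pi / 2) / sqrt (2 * pi)"
    by (simp add: std_normal_density_def)
  also have "\<dots> = sqrt ((pi / 2) / (2 * pi))"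
    by (simp only: real_sqrt_divide)
  also have "(pi / 2) / (2 * pi) = (1 / 2)\<^sup>2"
    by (simp add: power2_eq_square)
  finally show ?thesis by simp
qed

lemma sqrt_half_pi_bounds: "1 < sqrt (pi / 2)" "sqrt (pi / 2) < 3 / 2"
proof -
  show "1 < sqrt (pi / 2)"
    using pi_gt3 by (simp add: real_less_rsqrt)
  have "pi / 2 < (3 / 2)\<^sup>2"
    using pi_less_4 by (simp add: power2_eq_square)
  then show "sqrt (pi / 2) < 3 / 2"
    by (simp add: real_sqrt_less_iff[of _ "(3 / 2)\<^sup>2", simplified])
qed

lemma normal_tail_lt:
  assumes u: "u > 0"
  shows "normal_tail u < (sqrt (pi / 2) + u) * std_normal_density u"
proof (cases "u \<ge> 3 / 4")
  case True
  have "normal_tail u \<le> std_normal_density u / u"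
    using normal_tail_mills[OF u] u by (simp add: field_simps)
  also have "\<dots> \<le> std_normal_density u / (3 / 4)"
    using True by (intro divide_left_mono) auto
  also have "\<dots> = 4 / 3 * std_normal_density u"
    by simp
  also have "\<dots> < (sqrt (pi / 2) + u) * std_normal_density u"
    using True sqrt_half_pi_bounds(1) normal_density_pos[of 1 0 u]
    by (intro mult_strict_right_mono) linarith+
  finally show ?thesis .
next
  case False
  define \<psi> where "\<psi> t = (sqrt (pi / 2) + t) * std_normal_density t - normal_tail t" for t
  have "\<psi> 0 < \<psi> u"
  proof (rule DERIV_pos_imp_increasing_open[OF u])
    fix t assume t: "0 < t" "t < u"
    have "(\<psi> has_real_derivative std_normal_density t * (2 - t * sqrt (pi / 2) - t\<^sup>2)) (at t)"
      unfolding \<psi>_def using t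
      by (auto intro!: derivative_eq_intros std_normal_density_has_real_derivative
          normal_tail_has_real_derivative simp: algebra_simps power2_eq_square)
    moreover have "t * sqrt (pi / 2) \<le> 3 / 4 * (3 / 2)"
      using t False sqrt_half_pi_bounds by (intro mult_mono) auto
    moreover have "t\<^sup>2 \<le> (3 / 4)\<^sup>2"
      using t False by (intro power_mono) auto
    ultimately show "\<exists>y. (\<psi> has_real_derivative y) (at t) \<and> y > 0"
      using normal_density_pos[of 1 0 t] by (auto simp: power2_eq_square)
  next
    show "continuous_on {0..u} \<psi>"
      unfolding \<psi>_def normal_density_def
      by (intro continuous_intros continuous_on_normal_tail) simp
  qed
  moreover have "\<psi> 0 = 0"
    unfolding \<psi>_def using sqrt_half_pi_std_normal_density_0 normal_tail_0 by simp
  ultimately show ?thesis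
    unfolding \<psi>_def by simp
qed

lemma normal_tail_weighted_lt:
  assumes u: "u > 0"
  shows "(sqrt pi + sqrt 2 * u) * normal_tail u < sqrt pi / 2"
proof -
  define h where "h t = (sqrt pi + sqrt 2 * t) * normal_tail t" for t
  have "h u < h 0"
  proof (rule DERIV_neg_imp_decreasing_open[OF u])
    fix t assume t: "0 < t" "t < u"
    have "sqrt pi = sqrt 2 * sqrt (pi / 2)"
      by (simp add: real_sqrt_divide)
    then have "(h has_real_derivative sqrt 2 * (normal_tail t - (sqrt (pi / 2) + t) * std_normal_density t)) (at t)"
      unfolding h_def using t
      by (auto intro!: derivative_eq_intros normal_tail_has_real_derivative simp: algebra_simps)
    moreover have "normal_tail t - (sqrt (pi / 2) + t) * std_normal_density t < 0"
      using normal_tail_lt[OF t(1)] by simp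
    ultimately show "\<exists>y. (h has_real_derivative y) (at t) \<and> y < 0"
      by (auto simp: mult_pos_neg)
  next
    show "continuous_on {0..u} h"
      unfolding h_def by (intro continuous_intros continuous_on_normal_tail)
  qed
  then show ?thesis
    unfolding h_def by (simp add: normal_tail_0)
qed

lemma le_tail_argument_bound:
  fixes V s R m e q :: real
  assumes V: "V > 0" and s: "s = sqrt (2 * pi * V) / 4" and R: "R > 0" and m: "m \<le> sqrt 2 * R"
    and e: "e = R\<^sup>2 / 2 - s * m" and e0: "e > 0" and q0: "q > 0" and q: "q \<le> V / 2 * R\<^sup>2"
  shows "m \<le> 4 * s + 2 * sqrt V * (e / sqrt q)"
proof -
  have s_pos: "s > 0"
    using V by (simp add: s)
  have "m * (R + 2 * sqrt 2 * s) \<le> sqrt 2 * R * (R + 2 * sqrt 2 * s)"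
    using m R s_pos by (intro mult_right_mono) auto
  also have "\<dots> = 2 * sqrt 2 * e + 2 * sqrt 2 * s * m + 4 * s * R"
    by (simp add: e algebra_simps power2_eq_square)
  finally have "m \<le> 4 * s + 2 * sqrt 2 * e / R"
    using R by (simp add: field_simps)
  also have "2 * sqrt 2 * e / R \<le> 2 * sqrt V * (e / sqrt q)"
  proof -
    have "sqrt q \<le> sqrt (V / 2 * R\<^sup>2)"
      using q by (simp only: real_sqrt_le_iff)
    also have "\<dots> = sqrt V * R / sqrt 2"
      using R by (simp add: real_sqrt_mult real_sqrt_divide)
    finally have "sqrt 2 * sqrt q \<le> sqrt V * R"
      by (simp add: field_simps)
    then show ?thesis
      using R q0 e0 by (simp add: field_simps mult_left_mono)
  qed
  finally show ?thesis by simp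
qed

lemma mult_normal_tail_lt:
  fixes V s R m e q :: real
  assumes V: "V > 0" and s: "s = sqrt (2 * pi * V) / 4" and R: "R > 0" and m: "m \<le> sqrt 2 * R"
    and e: "e = R\<^sup>2 / 2 - s * m" and e0: "e > 0" and q0: "q > 0" and q: "q \<le> V / 2 * R\<^sup>2"
  shows "m * normal_tail (e / sqrt q) < 2 * s"
proof (cases "m \<le> 0")
  case True
  have "s > 0"
    using V by (simp add: s)
  then show ?thesis
    using mult_nonpos_nonneg[OF True normal_tail_nonneg[of "e / sqrt q"]] by linarith
next
  case False
  define u where "u = e / sqrt q"
  have u: "u > 0"
    using e0 q0 by (simp add: u_def)
  have "m * normal_tail u \<le> (4 * s + 2 * sqrt V * u) * normal_tail u"
    using le_tail_argument_bound[OF assms] normal_tail_nonneg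
    by (intro mult_right_mono) (simp_all add: u_def)
  also have "\<dots> = 4 * s / sqrt pi * ((sqrt pi + sqrt 2 * u) * normal_tail u)"
    by (simp add: s real_sqrt_mult field_simps)
  also have "\<dots> < 4 * s / sqrt pi * (sqrt pi / 2)"
    using normal_tail_weighted_lt[OF u] V by (intro mult_strict_left_mono) (simp_all add: s)
  finally show ?thesis
    by (simp add: u_def)
qed

lemma less_sqrt_power2_add_one: "c < sqrt (c\<^sup>2 + 1)"
proof -
  have "\<bar>c\<bar> = sqrt (c\<^sup>2)" by simp
  also have "\<dots> < sqrt (c\<^sup>2 + 1)" by (simp only: real_sqrt_less_iff)
  finally show ?thesis by linarith
qed

lemma thetaM_eq_arctan:
  "thetaM sx sy rho = pi + arctan (cpar sx sy rho - sqrt ((cpar sx sy rho)\<^sup>2 + 1))"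
proof -
  define t0 where "t0 = cpar sx sy rho - sqrt ((cpar sx sy rho)\<^sup>2 + 1)"
  have "cpar sx sy rho < sqrt ((cpar sx sy rho)\<^sup>2 + 1)"
    by (rule less_sqrt_power2_add_one)
  then have "arctan t0 < 0" "- (pi / 2) < arctan t0"
    using arctan_bounded[of t0] by (auto simp: t0_def)
  then show ?thesis
    unfolding thetaM_def t0_def[symmetric]
  proof (intro the_equality conjI)
    fix t assume t: "pi / 2 < t \<and> t < pi \<and> tan t = t0"
    then have "arctan t0 = t - pi"
      using arctan_tan[of "t - pi"] tan_periodic_pi[of "t - pi"] by auto
    then show "t = pi + arctan t0" by simp
  qed (simp_all add: add.commute[of pi] tan_arctan)
qed

lemma bvn_lin_variance_slope_le:
  assumes sx: "sx > 0" and sy: "sy > 0" and rho: "rho > 0" and sxy: "sx < sy"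
    and T0: "cpar sx sy rho - sqrt ((cpar sx sy rho)\<^sup>2 + 1) \<le> T" and T1: "T \<le> 1"
  shows "bvn_lin_variance sx sy rho 1 T \<le> bvn_lin_variance sx sy rho 1 1 / 2 * (1 + T\<^sup>2)"
proof -
  define c where "c = cpar sx sy rho"
  define w where "w = sqrt (c\<^sup>2 + 1)"
  define B where "B = (sx\<^sup>2 - sy\<^sup>2) / 2"
  define C where "C = rho * sx * sy"
  have C: "C > 0" using rho sx sy by (simp add: C_def)
  have B: "B < 0" using sxy sx by (simp add: B_def power_strict_mono)
  have c: "c = - B / C"
    using C unfolding c_def cpar_def B_def C_def by (simp add: divide_simps)
  have w: "w > c" "w > 0"
    using less_sqrt_power2_add_one[of c] by (auto simp: w_def intro!: add_nonneg_pos)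
  have "(B - C) + (B + C) * (c - w) = - C * w * (w + 1 - c)"
    using C by (simp add: c w_def field_simps power2_eq_square)
  also have "\<dots> < 0"
    using C w by (simp add: mult_pos_pos)
  finally have at_c_w: "(B - C) + (B + C) * (c - w) < 0" .
  \<comment> \<open>affine in T, and nonpositive at both ends c - w and 1 of the admissible range\<close>
  have slope: "(B - C) + (B + C) * T \<le> 0"
  proof (cases "B + C \<ge> 0")
    case True
    then show ?thesis using B T1 mult_left_mono[OF T1 True] by simp
  next
    case False
    then have "(B + C) * T \<le> (B + C) * (c - w)"
      using T0 by (intro mult_left_mono_neg) (auto simp: c_def w_def)
    then show ?thesis
      using at_c_w by linarith
  qed
  have "bvn_lin_variance sx sy rho 1 T - bvn_lin_variance sx sy rho 1 1 / 2 * (1 + T\<^sup>2)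
      = (1 - T) * ((B - C) + (B + C) * T)"
    unfolding bvn_lin_variance_def B_def C_def by (simp add: algebra_simps power2_eq_square field_simps)
  also have "\<dots> \<le> 0"
    using T1 slope by (simp add: mult_nonneg_nonpos)
  finally show ?thesis by simp
qed

lemma bvn_lin_variance_direction_le:
  assumes sx: "sx > 0" and sy: "sy > 0" and rho: "rho > 0" and sxy: "sx < sy"
    and theta: "thetaM sx sy rho \<le> theta" "theta \<le> 5 * pi / 4"
  shows "bvn_lin_variance sx sy rho (cos theta) (sin theta) \<le> bvn_lin_variance sx sy rho 1 1 / 2"
proof -
  define t0 where "t0 = cpar sx sy rho - sqrt ((cpar sx sy rho)\<^sup>2 + 1)"
  define \<phi> where "\<phi> = theta - pi"
  have t0: "t0 < 0"
    using less_sqrt_power2_add_one by (simp add: t0_def)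
  have \<phi>: "arctan t0 \<le> \<phi>" "\<phi> \<le> pi / 4"
    using theta thetaM_eq_arctan[of sx sy rho] by (auto simp: \<phi>_def t0_def)
  have arctan_t0: "- (pi / 2) < arctan t0" "arctan t0 < 0"
    using arctan_bounded[of t0] t0 by auto
  have cos_pos: "cos \<phi> > 0"
    using \<phi> arctan_t0 by (intro cos_gt_zero_pi) auto
  have "t0 \<le> tan \<phi>"
    using tan_mono_le[of "arctan t0" \<phi>] \<phi> arctan_t0 by (simp add: tan_arctan)
  moreover have "tan \<phi> \<le> 1"
    unfolding tan_45[symmetric] using \<phi> arctan_t0 by (intro tan_mono_le) auto
  ultimately have slope: "bvn_lin_variance sx sy rho 1 (tan \<phi>)
      \<le> bvn_lin_variance sx sy rho 1 1 / 2 * (1 + (tan \<phi>)\<^sup>2)"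
    using bvn_lin_variance_slope_le[OF sx sy rho sxy] by (simp add: t0_def)
  have "cos theta = - cos \<phi> * 1" "sin theta = - cos \<phi> * tan \<phi>"
    using cos_pos by (simp_all add: \<phi>_def cos_diff sin_diff tan_def)
  then have "bvn_lin_variance sx sy rho (cos theta) (sin theta)
      = (cos \<phi>)\<^sup>2 * bvn_lin_variance sx sy rho 1 (tan \<phi>)"
    by (simp only: bvn_lin_variance_scale) simp
  also have "\<dots> \<le> (cos \<phi>)\<^sup>2 * (bvn_lin_variance sx sy rho 1 1 / 2 * (1 + (tan \<phi>)\<^sup>2))"
    using slope by (rule mult_left_mono) simp
  also have "\<dots> = bvn_lin_variance sx sy rho 1 1 / 2 * ((cos \<phi>)\<^sup>2 * (1 + (tan \<phi>)\<^sup>2))"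
    by (simp only: ac_simps)
  also have "(cos \<phi>)\<^sup>2 * (1 + (tan \<phi>)\<^sup>2) = 1"
    using cos_pos by (simp add: tan_def power_divide field_simps)
  finally show ?thesis by simp
qed

lemma uminus_cos_add_sin_le: "- (cos t + sin t) \<le> sqrt 2"
proof -
  have "(cos t + sin t)\<^sup>2 + (cos t - sin t)\<^sup>2 = 2"
    using sin_cos_squared_add[of t] by (simp add: power2_eq_square algebra_simps)
  then have "(cos t + sin t)\<^sup>2 \<le> 2"
    using zero_le_power2[of "cos t - sin t"] by linarith
  then have "\<bar>cos t + sin t\<bar> \<le> sqrt 2"
    using real_sqrt_le_mono by fastforce
  then show ?thesis by linarith
qed

lemma K_diagonal_pos:
  assumes sx: "sx > 0" and sy: "sy > 0" and rho: "\<bar>rho\<bar> < 1" and r: "r > 0"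
    and s: "s = sqrt (2 * pi * bvn_lin_variance sx sy rho 1 1) / 4"
    and direction: "bvn_lin_variance sx sy rho (cos theta) (sin theta) \<le> bvn_lin_variance sx sy rho 1 1 / 2"
    and outside: "(s + r * cos theta)\<^sup>2 + (s + r * sin theta)\<^sup>2 > 2 * s\<^sup>2"
  shows "K sx sy rho (s + r * cos theta, s + r * sin theta) (s, s) > 0"
proof -
  define V where "V = bvn_lin_variance sx sy rho 1 1"
  define q where "q = bvn_lin_variance sx sy rho (r * cos theta) (r * sin theta)"
  define m where "m = - r * (cos theta + sin theta)"
  have ne: "(s + r * cos theta, s + r * sin theta) \<noteq> (s, s)"
  proof
    assume "(s + r * cos theta, s + r * sin theta) = (s, s)"
    then have "cos theta = 0" "sin theta = 0"
      using r by auto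
    then show False
      using sin_cos_squared_add[of theta] by simp
  qed
  have norm: "(s + r * cos theta)\<^sup>2 + (s + r * sin theta)\<^sup>2 - s\<^sup>2 - s\<^sup>2 = r\<^sup>2 - 2 * (s * m)"
  proof -
    have "(r * cos theta)\<^sup>2 + (r * sin theta)\<^sup>2 = r\<^sup>2"
      by (simp add: power_mult_distrib flip: distrib_left)
    then show ?thesis
      unfolding m_def power2_sum by (simp add: algebra_simps)
  qed
  have "K sx sy rho (s + r * cos theta, s + r * sin theta) (s, s)
      = s + s + (s + r * cos theta + (s + r * sin theta) - s - s)
          * normal_tail (((s + r * cos theta)\<^sup>2 + (s + r * sin theta)\<^sup>2 - s\<^sup>2 - s\<^sup>2) / (2 * sqrt q))"
    unfolding q_def using K_eq_normal_tail[OF sx sy rho ne] by simp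
  also have "\<dots> = 2 * s - m * normal_tail ((r\<^sup>2 / 2 - s * m) / sqrt q)"
    unfolding norm by (simp add: m_def field_simps)
  finally have K: "K sx sy rho (s + r * cos theta, s + r * sin theta) (s, s)
      = 2 * s - m * normal_tail ((r\<^sup>2 / 2 - s * m) / sqrt q)" .
  have "m * normal_tail ((r\<^sup>2 / 2 - s * m) / sqrt q) < 2 * s"
  proof (rule mult_normal_tail_lt[where V = V and R = r])
    show "V > 0"
      unfolding V_def using sx sy rho by (intro bvn_lin_variance_pos) auto
    show "q > 0"
      unfolding q_def using sx sy rho ne by (intro bvn_lin_variance_pos) auto
    show "q \<le> V / 2 * r\<^sup>2"
      using direction r by (simp add: q_def V_def bvn_lin_variance_scale mult_left_mono)
    show "m \<le> sqrt 2 * r"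
      using mult_left_mono[OF uminus_cos_add_sin_le[of theta], of r] r by (simp add: m_def algebra_simps)
    show "r\<^sup>2 / 2 - s * m > 0"
      using outside norm by linarith
  qed (use r s in \<open>simp_all add: V_def\<close>)
  then show ?thesis
    unfolding K by simp
qed

theorem mainTheorem13:
  fixes sx sy rho r theta x1 y1 :: real
  assumes "sx > 0" and "sy > 0" and "0 < rho" and "rho < 1" and "sx < sy"
    and "r > 0"
    and "thetaM sx sy rho \<le> theta" and "theta \<le> 5 * pi / 4"
    and "x1 = x2star sx sy rho + r * cos theta"
    and "y1 = x2star sx sy rho + r * sin theta"
    and "(x1, y1) \<noteq> astar sx sy rho"
    and "x1\<^sup>2 + y1\<^sup>2 > 2 * (x2star sx sy rho)\<^sup>2"
  shows "K sx sy rho (x1, y1) (bstar sx sy rho) > 0"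
  \<comment> \<open>The hypothesis on astar is implied by the last one, since astar lies on the circle of radius
    sqrt 2 * x2star around the origin.\<close>
  unfolding assms(9,10) bstar_def
proof (rule K_diagonal_pos)
  show "bvn_lin_variance sx sy rho (cos theta) (sin theta) \<le> bvn_lin_variance sx sy rho 1 1 / 2"
    by (rule bvn_lin_variance_direction_le[OF assms(1-3,5,7,8)])
  show "(x2star sx sy rho + r * cos theta)\<^sup>2 + (x2star sx sy rho + r * sin theta)\<^sup>2 > 2 * (x2star sx sy rho)\<^sup>2"
    using assms(12) unfolding assms(9,10) .
qed (use assms in \<open>simp_all add: x2star_def bvn_lin_variance_def\<close>)

end
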